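(* Assume the setting below, with $u_0\in C^7_0[x_l,x_r]$. (i) If $U^0,U^1\in Z^0_h$ are arbitrary and $U^2,\dots,U^N\in Z^0_h$ satisfy the scheme (S), then for all $0\le n\le N-1$, $$E^n:=\frac{\|U^{n+1}\|^2+\|U^n\|^2}{2}+\alpha\frac{\|U^{n+1}_x\|^2+\|U^n_x\|^2}{2}+\lambda\frac{\|U^{n+1}_{x\bar x}\|^2+\|U^n_{x\bar x}\|^2}{2}=E^0.$$ (ii) If moreover $U^0_i=u_0(x_i)$ for $0\le i\le M$ and $U^1\in Z^0_h$ satisfies the starting scheme (CN), then $\|U^1\|^2+\alpha\|U^1_x\|^2+\lambda\|U^1_{x\bar x}\|^2=\|U^0\|^2+\alpha\|U^0_x\|^2+\lambda\|U^0_{x\bar x}\|^2$, and there is a constant $C>0$ independent of $h,\tau,n$ such that $\|U^n\|_\infty\le C$ and $\|U^n_x\|_\infty\le C$ for all $0\le n\le N$.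
   Context: Setting. Fix an integer $m\ge1$, real constants $a,b,c,\nu$, positive constants $\alpha,\lambda$, $x_l<x_r$, $T>0$. $C^7_0[x_l,x_r]$ is the set of seven times continuously differentiable functions on $[x_l,x_r]$ with compact support in $(x_l,x_r)$. Integers $M\ge4$, $N\ge2$; $h=(x_r-x_l)/M$, $\tau=T/N$, $x_i=x_l+ih$, $t_n=n\tau$. A grid function is a real vector $U=(U_i)_{i=-1}^{M+1}$; $Z^0_h$ is the set of grid functions with $U_{-1}=U_0=U_1=U_{M-1}=U_M=U_{M+1}=0$ (it is assumed $u_0(x_1)=u_0(x_{M-1})=0$, so $U^0\in Z^0_h$ is consistent). Operators: $(U_x)_i=(U_{i+1}-U_i)/h$, $(U_{\bar x})_i=(U_i-U_{i-1})/h$, $(U_{\hat x})_i=(U_{i+1}-U_{i-1})/(2h)$, compound subscripts are compositions (e.g. $(U_{x\bar x})_i=(U_{i+1}-2U_i+U_{i-1})/h^2$). $(U,V)=h\sum_{i=1}^{M-1}U_iV_i$, $\|U\|^2=(U,U)$ (also applied to difference quotients, summing over $1\le i\le M-1$), $\|U\|_\infty=\max_{1\le i\le M-1}|U_i|$. For a sequence of grid functions $U^0,\dots,U^N$: $\bar U^n=(U^{n+1}+U^{n-1})/2$, $(U^n)_t=(U^{n+1}-U^{n-1})/(2\tau)$, and e.g. $(U^n)_{x\bar xt}=\big((U^{n+1}-U^{n-1})/(2\tau)\big)_{x\bar x}$, $(U^n)_{xx\bar x\bar xt}=\big((U^{n+1}-U^{n-1})/(2\tau)\big)_{xx\bar x\bar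 x}$. For grid functions $V,W$, $V^mW$ denotes $i\mapsto V_i^mW_i$. Scheme (S): for $1\le n\le N-1$ and $2\le i\le M-2$, $$(U^n)_{t,i}+a(\bar U^n)_{\hat x,i}+\tfrac{b}{m+2}\big[(U^n_i)^m(\bar U^n)_{\hat x,i}+((U^n)^m\bar U^n)_{\hat x,i}\big]+c(\bar U^n)_{x\bar x\hat x,i}-\alpha(U^n)_{x\bar xt,i}+\lambda(U^n)_{xx\bar x\bar xt,i}-\nu(\bar U^n)_{xx\bar x\bar x\hat x,i}=0.$$ Starting scheme (CN): with $W=(U^1+U^0)/2$, for $2\le i\le M-2$, $$\tfrac{U^1_i-U^0_i}{\tau}+aW_{\hat x,i}+\tfrac{b}{m+2}\big[W_i^mW_{\hat x,i}+(W^mW)_{\hat x,i}\big]-\alpha\Big(\tfrac{U^1-U^0}{\tau}\Big)_{x\bar x,i}+cW_{x\bar x\hat x,i}+\lambda\Big(\tfrac{U^1-U^0}{\tau}\Big)_{xx\bar x\bar x,i}-\nu W_{xx\bar x\bar x\hat x,i}=0.$$ *)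

theory Defs
  imports "HOL-Analysis.Analysis"
begin

text \<open>Grid functions are modelled as \<open>int \<Rightarrow> real\<close>; only indices -1..M+1 matter.
  A sequence of grid functions is \<open>nat \<Rightarrow> int \<Rightarrow> real\<close>.\<close>

definition C7_0 :: "real \<Rightarrow> real \<Rightarrow> (real \<Rightarrow> real) \<Rightarrow> bool" where
  "C7_0 xl xr u \<longleftrightarrow>
     (\<exists>D :: nat \<Rightarrow> real \<Rightarrow> real.
        (\<forall>x\<in>{xl..xr}. D 0 x = u x) \<and>
        (\<forall>k<7. \<forall>x\<in>{xl..xr}. (D k has_real_derivative D (Suc k) x) (at x within {xl..xr})) \<and>
        continuous_on {xl..xr} (D 7)) \<and>
     (\<exists>a b. xl < a \<and> a \<le> b \<and> b < xr \<and> (\<forall>x\<in>{xl..xr}. x \<notin> {a..b} \<longrightarrow> u x = 0))"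

definition dx :: "real \<Rightarrow> (int \<Rightarrow> real) \<Rightarrow> int \<Rightarrow> real" where
  "dx h U i = (U (i+1) - U i) / h"

definition dxb :: "real \<Rightarrow> (int \<Rightarrow> real) \<Rightarrow> int \<Rightarrow> real" where
  "dxb h U i = (U i - U (i-1)) / h"

definition dxh :: "real \<Rightarrow> (int \<Rightarrow> real) \<Rightarrow> int \<Rightarrow> real" where
  "dxh h U i = (U (i+1) - U (i-1)) / (2*h)"

definition gip :: "real \<Rightarrow> nat \<Rightarrow> (int \<Rightarrow> real) \<Rightarrow> (int \<Rightarrow> real) \<Rightarrow> real" where
  "gip h M U V = h * (\<Sum>i\<in>{1..int M - 1}. U i * V i)"

definition gnorm2 :: "real \<Rightarrow> nat \<Rightarrow> (int \<Rightarrow> real) \<Rightarrow> real" where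
  "gnorm2 h M U = gip h M U U"

definition gsup :: "nat \<Rightarrow> (int \<Rightarrow> real) \<Rightarrow> real" where
  "gsup M U = Max ((\<lambda>i. \<bar>U i\<bar>) ` {1..int M - 1})"

definition Z0 :: "nat \<Rightarrow> (int \<Rightarrow> real) \<Rightarrow> bool" where
  "Z0 M U \<longleftrightarrow> U (-1) = 0 \<and> U 0 = 0 \<and> U 1 = 0 \<and>
     U (int M - 1) = 0 \<and> U (int M) = 0 \<and> U (int M + 1) = 0"

text \<open>Time averages / central time difference at level n (n \<ge> 1).\<close>
definition tbar :: "(nat \<Rightarrow> int \<Rightarrow> real) \<Rightarrow> nat \<Rightarrow> int \<Rightarrow> real" where
  "tbar U n i = (U (n+1) i + U (n-1) i) / 2"

definition tdiff :: "real \<Rightarrow> (nat \<Rightarrow> int \<Rightarrow> real) \<Rightarrow> nat \<Rightarrow> int \<Rightarrow> real" where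
  "tdiff \<tau> U n i = (U (n+1) i - U (n-1) i) / (2*\<tau>)"

definition scheme_S ::
  "nat \<Rightarrow> real \<Rightarrow> real \<Rightarrow> real \<Rightarrow> real \<Rightarrow> real \<Rightarrow> real \<Rightarrow> real \<Rightarrow> real
   \<Rightarrow> (nat \<Rightarrow> int \<Rightarrow> real) \<Rightarrow> nat \<Rightarrow> int \<Rightarrow> bool" where
  "scheme_S m a b c \<nu> \<alpha> lam h \<tau> U n i \<longleftrightarrow>
    (let Ub = tbar U n; Ut = tdiff \<tau> U n in
      Ut i + a * dxh h Ub i
      + b / (real m + 2) * ((U n i) ^ m * dxh h Ub i + dxh h (\<lambda>j. (U n j) ^ m * Ub j) i)
      + c * dx h (dxb h (dxh h Ub)) i
      - \<alpha> * dx h (dxb h Ut) i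
      + lam * dx h (dx h (dxb h (dxb h Ut))) i
      - \<nu> * dx h (dx h (dxb h (dxb h (dxh h Ub)))) i = 0)"

definition scheme_CN ::
  "nat \<Rightarrow> real \<Rightarrow> real \<Rightarrow> real \<Rightarrow> real \<Rightarrow> real \<Rightarrow> real \<Rightarrow> real \<Rightarrow> real
   \<Rightarrow> (int \<Rightarrow> real) \<Rightarrow> (int \<Rightarrow> real) \<Rightarrow> int \<Rightarrow> bool" where
  "scheme_CN m a b c \<nu> \<alpha> lam h \<tau> U0 U1 i \<longleftrightarrow>
    (let W = (\<lambda>j. (U1 j + U0 j) / 2); D = (\<lambda>j. (U1 j - U0 j) / \<tau>) in
      D i + a * dxh h W i
      + b / (real m + 2) * ((W i) ^ m * dxh h W i + dxh h (\<lambda>j. (W j) ^ m * W j) i)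
      - \<alpha> * dx h (dxb h D) i
      + c * dx h (dxb h (dxh h W)) i
      + lam * dx h (dx h (dxb h (dxb h D))) i
      - \<nu> * dx h (dx h (dxb h (dxb h (dxh h W)))) i = 0)"

definition energy :: "real \<Rightarrow> real \<Rightarrow> real \<Rightarrow> nat \<Rightarrow> (nat \<Rightarrow> int \<Rightarrow> real) \<Rightarrow> nat \<Rightarrow> real" where
  "energy \<alpha> lam h M U n =
     (gnorm2 h M (U (n+1)) + gnorm2 h M (U n)) / 2
     + \<alpha> * (gnorm2 h M (dx h (U (n+1))) + gnorm2 h M (dx h (U n))) / 2
     + lam * (gnorm2 h M (dx h (dxb h (U (n+1)))) + gnorm2 h M (dx h (dxb h (U n)))) / 2"

end

theory Submission
  imports Defs "HOL-Library.Groups_Big_Fun"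
begin

text \<open>Both schemes say that a residual in the time difference
  \<open>d = (U\<^sup>n\<^sup>+\<^sup>1 - U\<^sup>n\<^sup>-\<^sup>1)/(2\<tau>)\<close> and the time average \<open>w = (U\<^sup>n\<^sup>+\<^sup>1 + U\<^sup>n\<^sup>-\<^sup>1)/2\<close> vanishes
  at the interior nodes; multiply by \<open>w\<close> and sum. Extended by zero, grid functions are finitely
  supported on \<open>\<int>\<close>, where summation by parts holds without boundary terms: the centred first
  difference is skew-adjoint and commutes with the self-adjoint operators \<open>D\<^sub>+D\<^sub>-\<close> and
  \<open>(D\<^sub>+D\<^sub>-)\<^sup>2\<close>, so the convective and dispersive terms and the skew-symmetrised nonlinearity
  drop out, while the remaining terms telescope to the difference of the energies at the levels
  \<open>n+1\<close> and \<open>n-1\<close>. The uniform bounds then follow from the discrete Sobolev inequality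
  \<open>U\<^sub>k\<^sup>2 \<le> \<parallel>U\<^sub>x\<parallel>\<^sup>2 + \<parallel>U\<parallel>\<^sup>2\<close> for \<open>U\<close> and \<open>U\<^sub>x\<close>, together with a bound on the initial energy
  by the first two derivatives of \<open>u\<^sub>0\<close> that does not depend on \<open>h\<close>.\<close>

definition finsupp :: "(int \<Rightarrow> real) \<Rightarrow> bool" where
  "finsupp f \<longleftrightarrow> finite {i. f i \<noteq> 0}"

lemma finsupp_shift [simp]: "finsupp f \<Longrightarrow> finsupp (\<lambda>i. f (i + k))"
proof -
  assume "finsupp f"
  moreover have "{i. f (i + k) \<noteq> 0} = (\<lambda>j. j - k) ` {j. f j \<noteq> 0}"
    by (force simp: image_iff)
  ultimately show ?thesis by (simp add: finsupp_def)
qed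

lemma finsupp_add [simp]: "finsupp f \<Longrightarrow> finsupp g \<Longrightarrow> finsupp (\<lambda>i. f i + g i)"
  unfolding finsupp_def by (rule finite_subset[of _ "{i. f i \<noteq> 0} \<union> {i. g i \<noteq> 0}"]) auto

lemma finsupp_diff [simp]: "finsupp f \<Longrightarrow> finsupp g \<Longrightarrow> finsupp (\<lambda>i. f i - g i)"
  unfolding finsupp_def by (rule finite_subset[of _ "{i. f i \<noteq> 0} \<union> {i. g i \<noteq> 0}"]) auto

lemma finsupp_minus [simp]: "finsupp f \<Longrightarrow> finsupp (\<lambda>i. - f i)"
  by (simp add: finsupp_def)

lemma finsupp_mult_left [simp]: "finsupp f \<Longrightarrow> finsupp (\<lambda>i. f i * g i)"
  unfolding finsupp_def by (rule finite_subset[of _ "{i. f i \<noteq> 0}"]) auto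

lemma finsupp_mult_right [simp]: "finsupp g \<Longrightarrow> finsupp (\<lambda>i. f i * g i)"
  unfolding finsupp_def by (rule finite_subset[of _ "{i. g i \<noteq> 0}"]) auto

lemma finsupp_divide [simp]: "finsupp f \<Longrightarrow> finsupp (\<lambda>i. f i / c)"
  unfolding finsupp_def by (rule finite_subset[of _ "{i. f i \<noteq> 0}"]) auto

lemma finsupp_power [simp]: "finsupp f \<Longrightarrow> finsupp (\<lambda>i. (f i)^2)"
  unfolding finsupp_def by simp

lemma finsupp_dx [simp]: "finsupp f \<Longrightarrow> finsupp (dx h f)"
  unfolding dx_def[abs_def] by simp

lemma finsupp_dxb [simp]: "finsupp f \<Longrightarrow> finsupp (dxb h f)"
  using finsupp_shift[of f "-1"] unfolding dxb_def[abs_def] by simp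

lemma finsupp_dxh [simp]: "finsupp f \<Longrightarrow> finsupp (dxh h f)"
  using finsupp_shift[of f "-1"] unfolding dxh_def[abs_def] by simp

lemma Sum_any_shift: "Sum_any (\<lambda>i. f (i + k)) = Sum_any (f :: int \<Rightarrow> real)"
  by (rule Sum_any.reindex_cong[OF bij_plus_right, symmetric]) (simp add: o_def)

lemma Sum_any_add:
  "finsupp f \<Longrightarrow> finsupp g \<Longrightarrow> Sum_any (\<lambda>i. f i + g i) = Sum_any f + Sum_any g"
  unfolding finsupp_def by (rule Sum_any.distrib)

lemma Sum_any_mult_left: "Sum_any (\<lambda>i. c * f i) = c * Sum_any (f :: int \<Rightarrow> real)"
proof (cases "c = 0")
  case False
  then have "{i. c * f i \<noteq> 0} = {i. f i \<noteq> 0}" by auto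
  then show ?thesis by (simp add: Sum_any.expand_set sum_distrib_left)
qed simp

lemma Sum_any_divide: "Sum_any (\<lambda>i. f i / c) = Sum_any (f :: int \<Rightarrow> real) / c"
  using Sum_any_mult_left[of "inverse c" f] by (simp add: field_simps)

lemma Sum_any_diff:
  "finsupp f \<Longrightarrow> finsupp g \<Longrightarrow> Sum_any (\<lambda>i. f i - g i) = Sum_any f - Sum_any g"
  using Sum_any_add[of f "\<lambda>i. - g i"] Sum_any_mult_left[of "-1" g] by simp

lemma Sum_any_dx_mult:
  assumes "finsupp f" "finsupp g"
  shows "Sum_any (\<lambda>i. dx h f i * g i) = - Sum_any (\<lambda>i. f i * dxb h g i)"
proof -
  have shift: "Sum_any (\<lambda>i. f (i + 1) * g i) = Sum_any (\<lambda>i. f i * g (i - 1))"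
    using Sum_any_shift[of "\<lambda>i. f i * g (i - 1)" 1] by simp
  have "Sum_any (\<lambda>i. dx h f i * g i) = (Sum_any (\<lambda>i. f (i + 1) * g i) - Sum_any (\<lambda>i. f i * g i)) / h"
    using assms by (simp add: dx_def diff_divide_distrib left_diff_distrib Sum_any_diff flip: Sum_any_divide)
  moreover have "Sum_any (\<lambda>i. f i * dxb h g i) = (Sum_any (\<lambda>i. f i * g i) - Sum_any (\<lambda>i. f i * g (i - 1))) / h"
    using assms by (simp add: dxb_def diff_divide_distrib right_diff_distrib Sum_any_diff flip: Sum_any_divide)
  ultimately show ?thesis
    by (simp add: shift diff_divide_distrib)
qed

lemma Sum_any_dxb_mult:
  "finsupp f \<Longrightarrow> finsupp g \<Longrightarrow> Sum_any (\<lambda>i. dxb h f i * g i) = - Sum_any (\<lambda>i. f i * dx h g i)"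
  using Sum_any_dx_mult[of g f h] by (simp add: mult.commute)

lemma dxh_eq_mean: "dxh h f i = (dx h f i + dxb h f i) / 2"
  by (simp add: dx_def dxb_def dxh_def add_divide_distrib[symmetric])

lemma Sum_any_dxh_mult:
  assumes "finsupp f" "finsupp g"
  shows "Sum_any (\<lambda>i. dxh h f i * g i) = - Sum_any (\<lambda>i. f i * dxh h g i)"
  using assms Sum_any_dx_mult[OF assms, of h] Sum_any_dxb_mult[OF assms, of h]
  by (simp add: dxh_eq_mean add_divide_distrib distrib_left distrib_right Sum_any_add Sum_any_divide)

lemma dx_dxb_commute: "dx h (dxb h f) = dxb h (dx h f)"
  by (simp add: fun_eq_iff dx_def dxb_def)

lemma Sum_any_lap_mult:
  assumes "finsupp f" "finsupp g"
  shows "Sum_any (\<lambda>i. dx h (dxb h f) i * g i) = - Sum_any (\<lambda>i. dx h f i * dx h g i)"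
proof -
  have "Sum_any (\<lambda>i. dx h (dxb h f) i * g i) = - Sum_any (\<lambda>i. dxb h f i * dxb h g i)"
    using assms by (simp add: Sum_any_dx_mult)
  also have "Sum_any (\<lambda>i. dxb h f i * dxb h g i) = Sum_any (\<lambda>i. dx h f i * dx h g i)"
    using Sum_any_shift[of "\<lambda>i. dxb h f i * dxb h g i" 1] by (simp add: dx_def dxb_def)
  finally show ?thesis .
qed

lemma Sum_any_lap_symmetric:
  "finsupp f \<Longrightarrow> finsupp g \<Longrightarrow>
    Sum_any (\<lambda>i. dx h (dxb h f) i * g i) = Sum_any (\<lambda>i. f i * dx h (dxb h g) i)"
  using Sum_any_lap_mult[of f g h] Sum_any_lap_mult[of g f h] by (simp add: mult.commute)

lemma Sum_any_bilap_mult: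
  assumes "finsupp f" "finsupp g"
  shows "Sum_any (\<lambda>i. dx h (dx h (dxb h (dxb h f))) i * g i)
    = Sum_any (\<lambda>i. dx h (dxb h f) i * dx h (dxb h g) i)"
  using assms Sum_any_lap_symmetric[of "dx h (dxb h f)" g h]
  by (simp add: dx_dxb_commute[of h "dxb h f"])

lemma Sum_any_bilap_symmetric:
  "finsupp f \<Longrightarrow> finsupp g \<Longrightarrow>
    Sum_any (\<lambda>i. dx h (dx h (dxb h (dxb h f))) i * g i)
    = Sum_any (\<lambda>i. f i * dx h (dx h (dxb h (dxb h g))) i)"
  using Sum_any_bilap_mult[of f g h] Sum_any_bilap_mult[of g f h] by (simp add: mult.commute)

lemma Sum_any_dxh_mult_self: "finsupp w \<Longrightarrow> Sum_any (\<lambda>i. dxh h w i * w i) = 0"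
  using Sum_any_dxh_mult[of w w h] by (simp add: mult.commute)

lemma Sum_any_commuting_dxh_mult_self:
  fixes A :: "(int \<Rightarrow> real) \<Rightarrow> int \<Rightarrow> real"
  assumes finsupp_A: "\<And>f. finsupp f \<Longrightarrow> finsupp (A f)"
    and symmetric: "\<And>f g. finsupp f \<Longrightarrow> finsupp g \<Longrightarrow>
      Sum_any (\<lambda>i. A f i * g i) = Sum_any (\<lambda>i. f i * A g i)"
    and commute: "A (dxh h w) = dxh h (A w)"
    and w: "finsupp w"
  shows "Sum_any (\<lambda>i. A (dxh h w) i * w i) = 0"
proof -
  have "Sum_any (\<lambda>i. A (dxh h w) i * w i) = Sum_any (\<lambda>i. dxh h w i * A w i)"
    using w by (simp add: symmetric finsupp_A)
  also have "\<dots> = - Sum_any (\<lambda>i. w i * A (dxh h w) i)"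
    using w by (simp add: Sum_any_dxh_mult finsupp_A commute)
  finally show ?thesis by (simp add: mult.commute)
qed

lemma lap_dxh_commute: "dx h (dxb h (dxh h f)) = dxh h (dx h (dxb h f))"
  by (cases "h = 0") (simp_all add: fun_eq_iff dx_def dxb_def dxh_def field_simps)

lemma bilap_dxh_commute:
  "dx h (dx h (dxb h (dxb h (dxh h f)))) = dxh h (dx h (dx h (dxb h (dxb h f))))"
  by (cases "h = 0") (simp_all add: fun_eq_iff dx_def dxb_def dxh_def field_simps)

lemma Sum_any_lap_dxh_mult_self:
  "finsupp w \<Longrightarrow> Sum_any (\<lambda>i. dx h (dxb h (dxh h w)) i * w i) = 0"
  by (rule Sum_any_commuting_dxh_mult_self[where A="\<lambda>f. dx h (dxb h f)"])
    (simp_all add: Sum_any_lap_symmetric lap_dxh_commute)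

lemma Sum_any_bilap_dxh_mult_self:
  "finsupp w \<Longrightarrow> Sum_any (\<lambda>i. dx h (dx h (dxb h (dxb h (dxh h w)))) i * w i) = 0"
  by (rule Sum_any_commuting_dxh_mult_self[where A="\<lambda>f. dx h (dx h (dxb h (dxb h f)))"])
    (simp_all add: Sum_any_bilap_symmetric bilap_dxh_commute)

lemma Sum_any_skew_product_mult_self:
  assumes "finsupp w"
  shows "Sum_any (\<lambda>i. (v i * dxh h w i + dxh h (\<lambda>j. v j * w j) i) * w i) = 0"
proof -
  have "Sum_any (\<lambda>i. (v i * dxh h w i + dxh h (\<lambda>j. v j * w j) i) * w i)
      = Sum_any (\<lambda>i. (v i * w i) * dxh h w i) + Sum_any (\<lambda>i. dxh h (\<lambda>j. v j * w j) i * w i)"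
    using assms by (subst Sum_any_add[symmetric]) (simp_all add: algebra_simps)
  also have "\<dots> = 0"
    using assms Sum_any_dxh_mult[of "\<lambda>j. v j * w j" w h] by simp
  finally show ?thesis .
qed

text \<open>Left-hand side of schemes (S) and (CN) with time difference \<open>d\<close>, time average \<open>w\<close>, and
  \<open>v\<close> the power \<open>u\<^sup>m\<close> of the nonlinear term; \<open>b\<close> stands for \<open>b/(m+2)\<close>.\<close>

definition kdv_residual ::
  "real \<Rightarrow> real \<Rightarrow> real \<Rightarrow> real \<Rightarrow> real \<Rightarrow> real \<Rightarrow> real
   \<Rightarrow> (int \<Rightarrow> real) \<Rightarrow> (int \<Rightarrow> real) \<Rightarrow> (int \<Rightarrow> real) \<Rightarrow> int \<Rightarrow> real" where
  "kdv_residual a b c \<nu> \<alpha> lam h v d w i =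
     d i + a * dxh h w i + b * (v i * dxh h w i + dxh h (\<lambda>j. v j * w j) i)
     + c * dx h (dxb h (dxh h w)) i - \<alpha> * dx h (dxb h d) i
     + lam * dx h (dx h (dxb h (dxb h d))) i - \<nu> * dx h (dx h (dxb h (dxb h (dxh h w)))) i"

definition energy_form :: "real \<Rightarrow> real \<Rightarrow> real \<Rightarrow> (int \<Rightarrow> real) \<Rightarrow> real" where
  "energy_form \<alpha> lam h f = Sum_any (\<lambda>i. (f i)^2)
     + \<alpha> * Sum_any (\<lambda>i. (dx h f i)^2) + lam * Sum_any (\<lambda>i. (dx h (dxb h f) i)^2)"

lemma Sum_any_kdv_residual_mult:
  assumes d: "finsupp d" and w: "finsupp w"
  shows "Sum_any (\<lambda>i. kdv_residual a b c \<nu> \<alpha> lam h v d w i * w i)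
    = Sum_any (\<lambda>i. d i * w i) + \<alpha> * Sum_any (\<lambda>i. dx h d i * dx h w i)
      + lam * Sum_any (\<lambda>i. dx h (dxb h d) i * dx h (dxb h w) i)"
proof -
  have "kdv_residual a b c \<nu> \<alpha> lam h v d w i * w i =
      d i * w i + a * (dxh h w i * w i) + b * ((v i * dxh h w i + dxh h (\<lambda>j. v j * w j) i) * w i)
      + c * (dx h (dxb h (dxh h w)) i * w i) - \<alpha> * (dx h (dxb h d) i * w i)
      + lam * (dx h (dx h (dxb h (dxb h d))) i * w i)
      - \<nu> * (dx h (dx h (dxb h (dxb h (dxh h w)))) i * w i)" for i
    by (simp add: kdv_residual_def algebra_simps)
  then show ?thesis
    using d w
    by (simp add: Sum_any_add Sum_any_diff Sum_any_mult_left Sum_any_dxh_mult_self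
        Sum_any_skew_product_mult_self Sum_any_lap_dxh_mult_self Sum_any_bilap_dxh_mult_self
        Sum_any_lap_mult Sum_any_bilap_mult)
qed

lemma dx_linear:
  "dx h (\<lambda>j. f j + g j) = (\<lambda>j. dx h f j + dx h g j)"
  "dx h (\<lambda>j. f j - g j) = (\<lambda>j. dx h f j - dx h g j)"
  "dx h (\<lambda>j. f j / c) = (\<lambda>j. dx h f j / c)"
  by (simp_all add: fun_eq_iff dx_def add_divide_distrib diff_divide_distrib mult.commute)

lemma dxb_linear:
  "dxb h (\<lambda>j. f j + g j) = (\<lambda>j. dxb h f j + dxb h g j)"
  "dxb h (\<lambda>j. f j - g j) = (\<lambda>j. dxb h f j - dxb h g j)"
  "dxb h (\<lambda>j. f j / c) = (\<lambda>j. dxb h f j / c)"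
  by (simp_all add: fun_eq_iff dxb_def add_divide_distrib diff_divide_distrib mult.commute)

lemma energy_form_conserved:
  assumes p: "finsupp p" and q: "finsupp q" and t: "t \<noteq> 0"
    and residual: "\<And>i. kdv_residual a b c \<nu> \<alpha> lam h v (\<lambda>j. (p j - q j) / t) (\<lambda>j. (p j + q j) / 2) i
      * ((p i + q i) / 2) = 0"
  shows "energy_form \<alpha> lam h p = energy_form \<alpha> lam h q"
proof -
  define d where "d = (\<lambda>j. (p j - q j) / t)"
  define w where "w = (\<lambda>j. (p j + q j) / 2)"
  have polarize: "Sum_any (\<lambda>i. (P i - Q i) / t * ((P i + Q i) / 2))
      = (Sum_any (\<lambda>i. (P i)^2) - Sum_any (\<lambda>i. (Q i)^2)) / (2 * t)"
    if "finsupp P" "finsupp Q" for P Q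
  proof -
    have "(P i - Q i) / t * ((P i + Q i) / 2) = ((P i)^2 - (Q i)^2) / (2 * t)" for i
      using t by (simp add: field_simps power2_eq_square)
    then show ?thesis using that by (simp add: Sum_any_diff Sum_any_divide)
  qed
  have lin: "dx h d = (\<lambda>j. (dx h p j - dx h q j) / t)" "dx h w = (\<lambda>j. (dx h p j + dx h q j) / 2)"
    "dx h (dxb h d) = (\<lambda>j. (dx h (dxb h p) j - dx h (dxb h q) j) / t)"
    "dx h (dxb h w) = (\<lambda>j. (dx h (dxb h p) j + dx h (dxb h q) j) / 2)"
    unfolding d_def w_def by (simp_all add: dx_linear dxb_linear)
  have "finsupp d" "finsupp w"
    using p q by (simp_all add: d_def w_def)
  then have "Sum_any (\<lambda>i. kdv_residual a b c \<nu> \<alpha> lam h v d w i * w i)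
      = Sum_any (\<lambda>i. d i * w i) + \<alpha> * Sum_any (\<lambda>i. dx h d i * dx h w i)
        + lam * Sum_any (\<lambda>i. dx h (dxb h d) i * dx h (dxb h w) i)"
    by (rule Sum_any_kdv_residual_mult)
  also have "\<dots> = (energy_form \<alpha> lam h p - energy_form \<alpha> lam h q) / (2 * t)"
    unfolding lin unfolding d_def w_def
    by (simp only: polarize p q finsupp_dx finsupp_dxb)
      (simp add: energy_form_def diff_divide_distrib add_divide_distrib algebra_simps)
  finally have "(energy_form \<alpha> lam h p - energy_form \<alpha> lam h q) / (2 * t)
      = Sum_any (\<lambda>i. kdv_residual a b c \<nu> \<alpha> lam h v d w i * w i)" ..
  also have "\<dots> = 0"
    unfolding d_def w_def residual by simp
  finally show ?thesis using t by simp
qed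

lemma kdv_residual_local:
  assumes "\<And>j. i - 3 \<le> j \<Longrightarrow> j \<le> i + 3 \<Longrightarrow> d j = d' j"
    and "\<And>j. i - 3 \<le> j \<Longrightarrow> j \<le> i + 3 \<Longrightarrow> w j = w' j"
  shows "kdv_residual a b c \<nu> \<alpha> lam h v d w i = kdv_residual a b c \<nu> \<alpha> lam h v d' w' i"
  using assms by (simp add: kdv_residual_def dx_def dxb_def dxh_def)

text \<open>Cutting off outside the nodes where the scheme holds makes the residual times \<open>w\<close> vanish
  everywhere, while on \<open>-1..M+1\<close> a function in \<open>Z0\<close> is unchanged.\<close>

definition cutoff :: "nat \<Rightarrow> (int \<Rightarrow> real) \<Rightarrow> int \<Rightarrow> real" where
  "cutoff M f i = (if 2 \<le> i \<and> i \<le> int M - 2 then f i else 0)"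

lemma finsupp_cutoff: "finsupp (cutoff M f)"
  unfolding finsupp_def cutoff_def by (rule finite_subset[of _ "{2..int M - 2}"]) auto

lemma cutoff_eq: "Z0 M f \<Longrightarrow> -1 \<le> j \<Longrightarrow> j \<le> int M + 1 \<Longrightarrow> cutoff M f j = f j"
  unfolding cutoff_def Z0_def
  by (cases "j = -1 \<or> j = 0 \<or> j = 1 \<or> j = int M - 1 \<or> j = int M \<or> j = int M + 1") auto

lemma gnorm2_eq_Sum_any:
  assumes "\<And>i. i \<in> {1..int M - 1} \<Longrightarrow> g i = f i" and "\<And>i. i \<notin> {1..int M - 1} \<Longrightarrow> g i = 0"
  shows "gnorm2 h M f = h * Sum_any (\<lambda>i. (g i)^2)"
proof -
  have "Sum_any (\<lambda>i. (g i)^2) = (\<Sum>i\<in>{1..int M - 1}. (g i)^2)"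
    by (rule Sum_any.expand_superset) (use assms(2) in fastforce)+
  also have "\<dots> = (\<Sum>i\<in>{1..int M - 1}. f i * f i)"
    by (rule sum.cong) (simp_all add: assms(1) power2_eq_square)
  finally show ?thesis by (simp add: gnorm2_def gip_def)
qed

definition grid_energy :: "real \<Rightarrow> real \<Rightarrow> real \<Rightarrow> nat \<Rightarrow> (int \<Rightarrow> real) \<Rightarrow> real" where
  "grid_energy \<alpha> lam h M f =
     gnorm2 h M f + \<alpha> * gnorm2 h M (dx h f) + lam * gnorm2 h M (dx h (dxb h f))"

lemma grid_energy_eq_energy_form:
  assumes f: "Z0 M f"
  shows "grid_energy \<alpha> lam h M f = h * energy_form \<alpha> lam h (cutoff M f)"
proof -
  have "gnorm2 h M f = h * Sum_any (\<lambda>i. (cutoff M f i)^2)"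
    by (rule gnorm2_eq_Sum_any) (simp add: cutoff_eq[OF f], auto simp: cutoff_def)
  moreover have "gnorm2 h M (dx h f) = h * Sum_any (\<lambda>i. (dx h (cutoff M f) i)^2)"
    by (rule gnorm2_eq_Sum_any) (simp add: dx_def cutoff_eq[OF f], auto simp: dx_def cutoff_def)
  moreover have "gnorm2 h M (dx h (dxb h f)) = h * Sum_any (\<lambda>i. (dx h (dxb h (cutoff M f)) i)^2)"
    by (rule gnorm2_eq_Sum_any) (simp add: dx_def dxb_def cutoff_eq[OF f], auto simp: dx_def dxb_def cutoff_def)
  ultimately show ?thesis
    by (simp add: grid_energy_def energy_form_def algebra_simps)
qed

lemma grid_energy_conserved:
  assumes P: "Z0 M P" and Q: "Z0 M Q" and t: "t \<noteq> 0"
    and residual: "\<And>i. 2 \<le> i \<Longrightarrow> i \<le> int M - 2 \<Longrightarrow>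
      kdv_residual a b c \<nu> \<alpha> lam h v (\<lambda>j. (P j - Q j) / t) (\<lambda>j. (P j + Q j) / 2) i = 0"
  shows "grid_energy \<alpha> lam h M P = grid_energy \<alpha> lam h M Q"
proof -
  let ?p = "cutoff M P" and ?q = "cutoff M Q"
  have "kdv_residual a b c \<nu> \<alpha> lam h v (\<lambda>j. (?p j - ?q j) / t) (\<lambda>j. (?p j + ?q j) / 2) i
      * ((?p i + ?q i) / 2) = 0" for i
  proof (cases "2 \<le> i \<and> i \<le> int M - 2")
    case True
    then have "kdv_residual a b c \<nu> \<alpha> lam h v (\<lambda>j. (?p j - ?q j) / t) (\<lambda>j. (?p j + ?q j) / 2) i
        = kdv_residual a b c \<nu> \<alpha> lam h v (\<lambda>j. (P j - Q j) / t) (\<lambda>j. (P j + Q j) / 2) i"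
      by (intro kdv_residual_local) (simp_all add: cutoff_eq[OF P] cutoff_eq[OF Q])
    then show ?thesis using True residual by simp
  next
    case False
    then have "cutoff M P i = 0" "cutoff M Q i = 0" by (auto simp: cutoff_def)
    then show ?thesis by simp
  qed
  then have "energy_form \<alpha> lam h ?p = energy_form \<alpha> lam h ?q"
    by (rule energy_form_conserved[OF finsupp_cutoff finsupp_cutoff t])
  then show ?thesis
    by (simp add: grid_energy_eq_energy_form[OF P] grid_energy_eq_energy_form[OF Q])
qed

lemma scheme_S_iff_kdv_residual:
  "scheme_S m a b c \<nu> \<alpha> lam h \<tau> U n i \<longleftrightarrow>
    kdv_residual a (b / (real m + 2)) c \<nu> \<alpha> lam h (\<lambda>j. (U n j)^m)
      (\<lambda>j. (U (n+1) j - U (n-1) j) / (2*\<tau>)) (\<lambda>j. (U (n+1) j + U (n-1) j) / 2) i = 0"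
  unfolding scheme_S_def kdv_residual_def tbar_def[abs_def] tdiff_def[abs_def] Let_def ..

lemma scheme_CN_iff_kdv_residual:
  "scheme_CN m a b c \<nu> \<alpha> lam h \<tau> U0 U1 i \<longleftrightarrow>
    kdv_residual a (b / (real m + 2)) c \<nu> \<alpha> lam h (\<lambda>j. ((U1 j + U0 j) / 2)^m)
      (\<lambda>j. (U1 j - U0 j) / \<tau>) (\<lambda>j. (U1 j + U0 j) / 2) i = 0"
  unfolding scheme_CN_def kdv_residual_def Let_def by (simp add: algebra_simps)

lemma grid_energy_step_S:
  assumes "Z0 M (U (n+1))" "Z0 M (U (n-1))" "\<tau> \<noteq> 0"
    and "\<And>i. 2 \<le> i \<Longrightarrow> i \<le> int M - 2 \<Longrightarrow> scheme_S m a b c \<nu> \<alpha> lam h \<tau> U n i"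
  shows "grid_energy \<alpha> lam h M (U (n+1)) = grid_energy \<alpha> lam h M (U (n-1))"
  using assms by (intro grid_energy_conserved[where t="2*\<tau>"]) (simp_all add: scheme_S_iff_kdv_residual)

lemma grid_energy_step_CN:
  assumes "Z0 M U1" "Z0 M U0" "\<tau> \<noteq> 0"
    and "\<And>i. 2 \<le> i \<Longrightarrow> i \<le> int M - 2 \<Longrightarrow> scheme_CN m a b c \<nu> \<alpha> lam h \<tau> U0 U1 i"
  shows "grid_energy \<alpha> lam h M U1 = grid_energy \<alpha> lam h M U0"
  using assms by (intro grid_energy_conserved[where t=\<tau>]) (simp_all add: scheme_CN_iff_kdv_residual)

lemma energy_eq_grid_energy:
  "energy \<alpha> lam h M U n = (grid_energy \<alpha> lam h M (U (n+1)) + grid_energy \<alpha> lam h M (U n)) / 2"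
  by (simp add: energy_def grid_energy_def field_simps)

lemma grid_energy_nonneg: "0 \<le> h \<Longrightarrow> 0 \<le> \<alpha> \<Longrightarrow> 0 \<le> lam \<Longrightarrow> 0 \<le> grid_energy \<alpha> lam h M f"
  by (simp add: grid_energy_def gnorm2_def gip_def sum_nonneg)

lemma energy_conserved:
  assumes "\<tau> \<noteq> 0" and "\<forall>n\<le>N. Z0 M (U n)"
    and "\<forall>n. 1 \<le> n \<and> n \<le> N - 1 \<longrightarrow>
      (\<forall>i. 2 \<le> i \<and> i \<le> int M - 2 \<longrightarrow> scheme_S m a b c \<nu> \<alpha> lam h \<tau> U n i)"
  shows "n \<le> N - 1 \<Longrightarrow> energy \<alpha> lam h M U n = energy \<alpha> lam h M U 0"
proof (induction n)
  case (Suc n)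
  have "grid_energy \<alpha> lam h M (U (Suc n + 1)) = grid_energy \<alpha> lam h M (U (Suc n - 1))"
    by (rule grid_energy_step_S) (use assms Suc.prems in auto)
  then show ?case
    using Suc by (simp add: energy_eq_grid_energy)
qed simp

lemma grid_energy_le_twice_initial:
  assumes "\<tau> \<noteq> 0" and "1 \<le> N" and "0 \<le> h" "0 \<le> \<alpha>" "0 \<le> lam"
    and Z: "\<forall>n\<le>N. Z0 M (U n)"
    and S: "\<forall>n. 1 \<le> n \<and> n \<le> N - 1 \<longrightarrow>
      (\<forall>i. 2 \<le> i \<and> i \<le> int M - 2 \<longrightarrow> scheme_S m a b c \<nu> \<alpha> lam h \<tau> U n i)"
    and CN: "\<forall>i. 2 \<le> i \<and> i \<le> int M - 2 \<longrightarrow> scheme_CN m a b c \<nu> \<alpha> lam h \<tau> (U 0) (U 1) i"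
    and "n \<le> N"
  shows "grid_energy \<alpha> lam h M (U n) \<le> 2 * grid_energy \<alpha> lam h M (U 0)"
proof -
  have nonneg: "0 \<le> grid_energy \<alpha> lam h M f" for f
    using assms by (simp add: grid_energy_nonneg)
  have "grid_energy \<alpha> lam h M (U 1) = grid_energy \<alpha> lam h M (U 0)"
    by (rule grid_energy_step_CN) (use assms in auto)
  then have energy_0: "energy \<alpha> lam h M U 0 = grid_energy \<alpha> lam h M (U 0)"
    by (simp add: energy_eq_grid_energy)
  define k where "k = min n (N - 1)"
  have "k \<le> N - 1" "n = k \<or> n = k + 1"
    using \<open>n \<le> N\<close> \<open>1 \<le> N\<close> by (auto simp: k_def)
  moreover have "energy \<alpha> lam h M U k = grid_energy \<alpha> lam h M (U 0)"
    using energy_conserved[OF assms(1) Z S \<open>k \<le> N - 1\<close>] energy_0 by simp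
  ultimately show ?thesis
    using nonneg[of "U k"] nonneg[of "U (k+1)"] by (auto simp: energy_eq_grid_energy)
qed

lemma discrete_sobolev_sq_le:
  fixes g :: "int \<Rightarrow> real"
  assumes g0: "g 0 = 0" and h: "0 < h"
  shows "0 \<le> k \<Longrightarrow> (g k)^2 \<le> h * (\<Sum>i\<in>{1..k}. (dxb h g i)^2) + h * (\<Sum>i\<in>{1..k}. (g i)^2)"
proof (induction k rule: int_ge_induct)
  case (step k)
  define b where "b = dxb h g (k + 1)"
  have "g k = g (k + 1) - h * b"
    using h by (simp add: b_def dxb_def)
  then have "(g (k + 1))^2 = (g k)^2 + h * (2 * b * g (k + 1)) - h^2 * b^2"
    by (simp only:) (simp add: power2_eq_square algebra_simps)
  also have "\<dots> \<le> (g k)^2 + h * (b^2 + (g (k + 1))^2)"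
  proof -
    have "h * (2 * b * g (k + 1)) \<le> h * (b^2 + (g (k + 1))^2)"
      using h sum_squares_bound[of b "g (k + 1)"] by (intro mult_left_mono) auto
    moreover have "0 \<le> h^2 * b^2" by simp
    ultimately show ?thesis by linarith
  qed
  also have "\<dots> \<le> h * (\<Sum>i\<in>{1..k + 1}. (dxb h g i)^2) + h * (\<Sum>i\<in>{1..k + 1}. (g i)^2)"
    using step.IH step.hyps by (simp add: b_def atLeastAtMostPlus1_int_conv algebra_simps)
  finally show ?case .
qed (simp add: g0)

lemma gnorm2_eq_sum_power2: "gnorm2 h M f = h * (\<Sum>i\<in>{1..int M - 1}. (f i)^2)"
  by (simp add: gnorm2_def gip_def power2_eq_square)

lemma sum_power2_atLeastAtMost_mono:
  fixes X :: "int \<Rightarrow> real"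
  shows "k \<le> n \<Longrightarrow> (\<Sum>i\<in>{1..k}. (X i)^2) \<le> (\<Sum>i\<in>{1..n}. (X i)^2)"
  by (intro sum_mono2) auto

lemma Z0_sq_le:
  assumes f: "Z0 M f" and h: "0 < h" and k: "1 \<le> k" "k \<le> int M - 1"
  shows "(f k)^2 \<le> gnorm2 h M (dx h f) + gnorm2 h M f"
proof -
  have f0: "f 0 = 0" "f 1 = 0" using f by (simp_all add: Z0_def)
  have "(\<Sum>i\<in>{1..k}. (dxb h f i)^2) = (\<Sum>i\<in>{0..k - 1}. (dx h f i)^2)"
    by (rule sum.reindex_bij_witness[where i="\<lambda>i. i + 1" and j="\<lambda>i. i - 1"])
      (auto simp: dx_def dxb_def)
  also have "\<dots> \<le> (\<Sum>i\<in>insert 0 {1..int M - 1}. (dx h f i)^2)"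
    using k by (intro sum_mono2) auto
  also have "\<dots> = (\<Sum>i\<in>{1..int M - 1}. (dx h f i)^2)"
    using f0 by (simp add: dx_def)
  finally have "(\<Sum>i\<in>{1..k}. (dxb h f i)^2) \<le> (\<Sum>i\<in>{1..int M - 1}. (dx h f i)^2)" .
  moreover have "(\<Sum>i\<in>{1..k}. (f i)^2) \<le> (\<Sum>i\<in>{1..int M - 1}. (f i)^2)"
    using k(2) by (rule sum_power2_atLeastAtMost_mono)
  ultimately have "h * (\<Sum>i\<in>{1..k}. (dxb h f i)^2) + h * (\<Sum>i\<in>{1..k}. (f i)^2)
      \<le> gnorm2 h M (dx h f) + gnorm2 h M f"
    using h by (simp add: gnorm2_eq_sum_power2 add_mono)
  then show ?thesis
    using discrete_sobolev_sq_le[of f h k] f0 h k by simp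
qed

lemma Z0_dx_sq_le:
  assumes f: "Z0 M f" and h: "0 < h" and k: "1 \<le> k" "k \<le> int M - 1"
  shows "(dx h f k)^2 \<le> gnorm2 h M (dx h (dxb h f)) + gnorm2 h M (dx h f)"
proof -
  have "h * (\<Sum>i\<in>{1..k}. (dxb h (dx h f) i)^2) + h * (\<Sum>i\<in>{1..k}. (dx h f i)^2)
      \<le> gnorm2 h M (dx h (dxb h f)) + gnorm2 h M (dx h f)"
    using h k by (simp add: gnorm2_eq_sum_power2 dx_dxb_commute add_mono sum_power2_atLeastAtMost_mono)
  moreover have "dx h f 0 = 0" using f by (simp add: Z0_def dx_def)
  ultimately show ?thesis
    using discrete_sobolev_sq_le[of "dx h f" h k] h k by simp
qed

lemma gsup_le_sqrt:
  assumes "2 \<le> M" and "\<And>k. 1 \<le> k \<Longrightarrow> k \<le> int M - 1 \<Longrightarrow> (f k)^2 \<le> X"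
  shows "gsup M f \<le> sqrt X"
  unfolding gsup_def
proof (subst Max_le_iff)
  show "\<forall>y\<in>(\<lambda>i. \<bar>f i\<bar>) ` {1..int M - 1}. y \<le> sqrt X"
    using assms(2) by (auto simp flip: real_sqrt_abs intro!: real_sqrt_le_mono)
qed (use assms(1) in auto)

lemma bounded_on_interval_of_deriv:
  fixes F F' :: "real \<Rightarrow> real"
  assumes "\<And>x. x \<in> {a..b} \<Longrightarrow> (F has_real_derivative F' x) (at x within {a..b})"
  obtains K where "\<And>x. x \<in> {a..b} \<Longrightarrow> \<bar>F x\<bar> \<le> K"
proof -
  have "continuous_on {a..b} F"
    unfolding continuous_on_eq_continuous_within using assms DERIV_continuous by blast
  then have "bounded (F ` {a..b})"
    by (intro compact_imp_bounded compact_continuous_image) auto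
  then show ?thesis using that unfolding bounded_real by (metis atLeastAtMost_iff image_eqI)
qed

lemma difference_quotient_eq_deriv:
  fixes F F' :: "real \<Rightarrow> real"
  assumes F': "\<And>x. x \<in> {a..b} \<Longrightarrow> (F has_real_derivative F' x) (at x within {a..b})"
    and "a \<le> y" "0 < \<delta>" "y + \<delta> \<le> b"
  obtains z where "y < z" "z < y + \<delta>" "(F (y + \<delta>) - F y) / \<delta> = F' z"
proof -
  have "\<exists>z\<in>{y<..<y + \<delta>}. F (y + \<delta>) - F y = F' z * (y + \<delta> - y)"
  proof (rule mvt_simple)
    fix x assume "y \<le> x" "x \<le> y + \<delta>"
    then have "(F has_real_derivative F' x) (at x within {y..y + \<delta>})"
      using assms by (intro DERIV_subset[OF F']) auto
    then show "(F has_derivative (*) (F' x)) (at x within {y..y + \<delta>})"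
      by (simp add: has_field_derivative_def mult.commute)
  qed (use assms in simp)
  with that \<open>0 < \<delta>\<close> show ?thesis by force
qed

lemma abs_diff_le_of_deriv_bound:
  fixes F F' :: "real \<Rightarrow> real"
  assumes "\<And>x. x \<in> {a..b} \<Longrightarrow> (F has_real_derivative F' x) (at x within {a..b})"
    and "\<And>x. x \<in> {a..b} \<Longrightarrow> \<bar>F' x\<bar> \<le> K" and "x \<in> {a..b}" "y \<in> {a..b}"
  shows "\<bar>F x - F y\<bar> \<le> K * \<bar>x - y\<bar>"
  using field_differentiable_bound[of "{a..b}" F F' K x y] assms by simp

lemma gnorm2_le_of_abs_le:
  assumes "\<And>i. i \<in> {1..int M - 1} \<Longrightarrow> \<bar>f i\<bar> \<le> K" and "0 \<le> h"
  shows "gnorm2 h M f \<le> h * real M * K^2"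
proof -
  have "(\<Sum>i\<in>{1..int M - 1}. (f i)^2) \<le> of_nat (card {1..int M - 1}) * K^2"
    using assms(1) by (intro sum_bounded_above) (force simp flip: abs_le_square_iff)
  also have "\<dots> \<le> real M * K^2" by (intro mult_right_mono) auto
  finally show ?thesis
    using assms(2) by (simp add: gnorm2_eq_sum_power2 mult.assoc mult_left_mono)
qed

lemma grid_energy_samples_le:
  fixes F F' F'' :: "real \<Rightarrow> real"
  assumes F': "\<And>x. x \<in> {xl..xr} \<Longrightarrow> (F has_real_derivative F' x) (at x within {xl..xr})"
    and F'': "\<And>x. x \<in> {xl..xr} \<Longrightarrow> (F' has_real_derivative F'' x) (at x within {xl..xr})"
    and K0: "\<And>x. x \<in> {xl..xr} \<Longrightarrow> \<bar>F x\<bar> \<le> K0"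
    and K1: "\<And>x. x \<in> {xl..xr} \<Longrightarrow> \<bar>F' x\<bar> \<le> K1"
    and K2: "\<And>x. x \<in> {xl..xr} \<Longrightarrow> \<bar>F'' x\<bar> \<le> K2"
    and "xl < xr" "1 \<le> M" "0 \<le> \<alpha>" "0 \<le> lam"
    and samples: "\<And>i. 0 \<le> i \<Longrightarrow> i \<le> int M \<Longrightarrow> U i = F (xl + real_of_int i * ((xr - xl) / real M))"
  shows "grid_energy \<alpha> lam ((xr - xl) / real M) M U \<le> (xr - xl) * (K0^2 + \<alpha> * K1^2 + lam * (2 * K2)^2)"
proof -
  define h where "h = (xr - xl) / real M"
  define x where "x i = xl + real_of_int i * h" for i
  have h: "0 < h" and hM: "h * real M = xr - xl"
    using assms(6,7) by (simp_all add: h_def)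
  have grid: "x i \<in> {xl..xr}" if "0 \<le> i" "i \<le> int M" for i
  proof -
    have "real_of_int i * h \<le> real M * h" using that h by (intro mult_right_mono) auto
    then show ?thesis using that h hM by (auto simp: x_def mult.commute)
  qed
  have sample: "U i = F (x i)" if "0 \<le> i" "i \<le> int M" for i
    using that by (simp add: samples x_def h_def)
  have x_step: "x (i + 1) = x i + h" "x (i - 1) + h = x i" for i
    by (simp_all add: x_def algebra_simps)
  have "\<exists>z. x i < z \<and> z < x (i + 1) \<and> dx h U i = F' z" if "0 \<le> i" "i \<le> int M - 1" for i
  proof -
    have "xl \<le> x i" "x i + h \<le> xr"
      using grid[of i] grid[of "i + 1"] that by (simp_all add: x_step)
    then obtain z where "x i < z" "z < x i + h" "(F (x i + h) - F (x i)) / h = F' z"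
      using difference_quotient_eq_deriv[OF F' _ h] by blast
    moreover have "dx h U i = (F (x i + h) - F (x i)) / h"
      using that sample[of i] sample[of "i + 1"] by (simp add: dx_def x_step)
    ultimately show ?thesis by (auto simp: x_step)
  qed
  then obtain z where z: "\<And>i. 0 \<le> i \<Longrightarrow> i \<le> int M - 1 \<Longrightarrow> x i < z i \<and> z i < x (i + 1) \<and> dx h U i = F' (z i)"
    by metis
  have z_grid: "z i \<in> {xl..xr}" if "0 \<le> i" "i \<le> int M - 1" for i
    using z[OF that] grid[of i] grid[of "i + 1"] that by auto
  have b0: "\<bar>U i\<bar> \<le> K0" if "i \<in> {1..int M - 1}" for i
    using that K0 grid[of i] sample[of i] by simp
  have b1: "\<bar>dx h U i\<bar> \<le> K1" if "i \<in> {1..int M - 1}" for i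
    using that z[of i] K1 z_grid[of i] by simp
  have b2: "\<bar>dx h (dxb h U) i\<bar> \<le> 2 * K2" if "i \<in> {1..int M - 1}" for i
  proof -
    have "dx h (dxb h U) i = (F' (z i) - F' (z (i - 1))) / h"
      using that z[of i] z[of "i - 1"] by (simp add: dx_def dxb_def)
    moreover have "\<bar>F' (z i) - F' (z (i - 1))\<bar> \<le> K2 * \<bar>z i - z (i - 1)\<bar>"
      using that by (intro abs_diff_le_of_deriv_bound[OF F''] K2 z_grid) auto
    moreover have "K2 * \<bar>z i - z (i - 1)\<bar> \<le> K2 * (2 * h)"
    proof (rule mult_left_mono)
      show "\<bar>z i - z (i - 1)\<bar> \<le> 2 * h"
        using that z[of i] z[of "i - 1"] x_step[of i] by auto
      show "0 \<le> K2" using K2[of xl] assms(6) by force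
    qed
    ultimately show ?thesis
      using h by (simp add: abs_divide pos_divide_le_eq)
  qed
  have "grid_energy \<alpha> lam h M U \<le> h * real M * K0^2 + \<alpha> * (h * real M * K1^2) + lam * (h * real M * (2 * K2)^2)"
    unfolding grid_energy_def using h assms(8,9)
    by (intro add_mono mult_left_mono gnorm2_le_of_abs_le b0 b1 b2) auto
  then show ?thesis by (simp add: h_def[symmetric] hM algebra_simps)
qed

lemma C7_0_samples_grid_energy_bounded:
  assumes u: "C7_0 xl xr u" and "xl < xr" "0 \<le> \<alpha>" "0 \<le> lam"
  obtains B where "0 \<le> B"
    and "\<And>M U. 1 \<le> M \<Longrightarrow> \<forall>i. 0 \<le> i \<and> i \<le> int M \<longrightarrow> U i = u (xl + real_of_int i * ((xr - xl) / real M))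
      \<Longrightarrow> grid_energy \<alpha> lam ((xr - xl) / real M) M U \<le> B"
proof -
  obtain D :: "nat \<Rightarrow> real \<Rightarrow> real" where D0: "\<forall>x\<in>{xl..xr}. D 0 x = u x"
    and D: "\<forall>k<7. \<forall>x\<in>{xl..xr}. (D k has_real_derivative D (Suc k) x) (at x within {xl..xr})"
    using u unfolding C7_0_def by blast
  have u': "(u has_real_derivative D 1 x) (at x within {xl..xr})" if "x \<in> {xl..xr}" for x
  proof (rule has_field_derivative_transform_within[OF _ zero_less_one that])
    show "(D 0 has_real_derivative D 1 x) (at x within {xl..xr})"
      using D that by simp
  qed (simp add: D0)
  have D1: "(D 1 has_real_derivative D 2 x) (at x within {xl..xr})"
    and D2: "(D 2 has_real_derivative D 3 x) (at x within {xl..xr})" if "x \<in> {xl..xr}" for x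
    using D[rule_format, of 1 x] D[rule_format, of 2 x] that by (simp_all add: numeral_eq_Suc)
  obtain K0 where K0: "\<And>x. x \<in> {xl..xr} \<Longrightarrow> \<bar>u x\<bar> \<le> K0"
    using bounded_on_interval_of_deriv[OF u'] by blast
  obtain K1 where K1: "\<And>x. x \<in> {xl..xr} \<Longrightarrow> \<bar>D 1 x\<bar> \<le> K1"
    using bounded_on_interval_of_deriv[OF D1] by blast
  obtain K2 where K2: "\<And>x. x \<in> {xl..xr} \<Longrightarrow> \<bar>D 2 x\<bar> \<le> K2"
    using bounded_on_interval_of_deriv[OF D2] by blast
  show ?thesis
  proof
    show "0 \<le> (xr - xl) * (K0^2 + \<alpha> * K1^2 + lam * (2 * K2)^2)"
      using assms by simp
    show "grid_energy \<alpha> lam ((xr - xl) / real M) M U \<le> (xr - xl) * (K0^2 + \<alpha> * K1^2 + lam * (2 * K2)^2)"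
      if "1 \<le> M" "\<forall>i. 0 \<le> i \<and> i \<le> int M \<longrightarrow> U i = u (xl + real_of_int i * ((xr - xl) / real M))" for M U
      using that assms by (intro grid_energy_samples_le[OF u' D1 K0 K1 K2]) simp_all
  qed
qed

lemma gsup_le_of_grid_energy:
  assumes f: "Z0 M f" and "2 \<le> M" "0 < h" "0 < \<alpha>" "0 < lam"
    and E: "grid_energy \<alpha> lam h M f \<le> E"
  shows "gsup M f \<le> sqrt (E / \<alpha> + E)" and "gsup M (dx h f) \<le> sqrt (E / lam + E / \<alpha>)"
proof -
  have nonneg: "0 \<le> gnorm2 h M g" for g
    using \<open>0 < h\<close> by (simp add: gnorm2_eq_sum_power2 sum_nonneg)
  have "0 \<le> \<alpha> * gnorm2 h M (dx h f)" "0 \<le> lam * gnorm2 h M (dx h (dxb h f))"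
    using nonneg assms(4,5) by simp_all
  then have "gnorm2 h M f \<le> E" "\<alpha> * gnorm2 h M (dx h f) \<le> E" "lam * gnorm2 h M (dx h (dxb h f)) \<le> E"
    using E nonneg[of f] unfolding grid_energy_def by linarith+
  then have bounds: "gnorm2 h M f \<le> E" "gnorm2 h M (dx h f) \<le> E / \<alpha>"
    "gnorm2 h M (dx h (dxb h f)) \<le> E / lam"
    using assms(4,5) by (simp_all add: pos_le_divide_eq mult.commute)
  show "gsup M f \<le> sqrt (E / \<alpha> + E)"
  proof (rule gsup_le_sqrt[OF \<open>2 \<le> M\<close>])
    fix k assume "1 \<le> k" "k \<le> int M - 1"
    then have "(f k)^2 \<le> gnorm2 h M (dx h f) + gnorm2 h M f"
      by (rule Z0_sq_le[OF f \<open>0 < h\<close>])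
    also have "\<dots> \<le> E / \<alpha> + E"
      using bounds by (intro add_mono)
    finally show "(f k)^2 \<le> E / \<alpha> + E" .
  qed
  show "gsup M (dx h f) \<le> sqrt (E / lam + E / \<alpha>)"
  proof (rule gsup_le_sqrt[OF \<open>2 \<le> M\<close>])
    fix k assume "1 \<le> k" "k \<le> int M - 1"
    then have "(dx h f k)^2 \<le> gnorm2 h M (dx h (dxb h f)) + gnorm2 h M (dx h f)"
      by (rule Z0_dx_sq_le[OF f \<open>0 < h\<close>])
    also have "\<dots> \<le> E / lam + E / \<alpha>"
      using bounds by (intro add_mono)
    finally show "(dx h f k)^2 \<le> E / lam + E / \<alpha>" .
  qed
qed

lemma scheme_solution_sup_bounds:
  assumes "0 < h" "\<tau> \<noteq> 0" "2 \<le> M" "1 \<le> N" "0 < \<alpha>" "0 < lam"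
    and Z: "\<forall>n\<le>N. Z0 M (U n)"
    and S: "\<forall>n. 1 \<le> n \<and> n \<le> N - 1 \<longrightarrow>
      (\<forall>i. 2 \<le> i \<and> i \<le> int M - 2 \<longrightarrow> scheme_S m a b c \<nu> \<alpha> lam h \<tau> U n i)"
    and CN: "\<forall>i. 2 \<le> i \<and> i \<le> int M - 2 \<longrightarrow> scheme_CN m a b c \<nu> \<alpha> lam h \<tau> (U 0) (U 1) i"
    and B: "grid_energy \<alpha> lam h M (U 0) \<le> B" and "n \<le> N"
  shows "gsup M (U n) \<le> sqrt (2 * B / \<alpha> + 2 * B)"
    and "gsup M (dx h (U n)) \<le> sqrt (2 * B / lam + 2 * B / \<alpha>)"
proof -
  have "grid_energy \<alpha> lam h M (U n) \<le> 2 * B"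
    using grid_energy_le_twice_initial[OF assms(2,4) _ _ _ Z S CN \<open>n \<le> N\<close>] assms(1,5,6) B by fastforce
  then show "gsup M (U n) \<le> sqrt (2 * B / \<alpha> + 2 * B)"
    and "gsup M (dx h (U n)) \<le> sqrt (2 * B / lam + 2 * B / \<alpha>)"
    using gsup_le_of_grid_energy[of M "U n" h \<alpha> lam "2 * B"] Z assms(1,3,5,6) \<open>n \<le> N\<close> by simp_all
qed

theorem theorem2:
  fixes m :: nat and a b c \<nu> \<alpha> lam xl xr T :: real and u0 :: "real \<Rightarrow> real"
  assumes "m \<ge> 1" and "\<alpha> > 0" and "lam > 0" and "xl < xr" and "T > 0"
    and "C7_0 xl xr u0"
  shows
   "(\<forall>(M::nat) (N::nat) (U :: nat \<Rightarrow> int \<Rightarrow> real).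
       let h = (xr - xl) / real M; \<tau> = T / real N in
       M \<ge> 4 \<longrightarrow> N \<ge> 2 \<longrightarrow> (\<forall>n\<le>N. Z0 M (U n)) \<longrightarrow>
       (\<forall>n. 1 \<le> n \<and> n \<le> N - 1 \<longrightarrow> (\<forall>i. 2 \<le> i \<and> i \<le> int M - 2 \<longrightarrow>
            scheme_S m a b c \<nu> \<alpha> lam h \<tau> U n i)) \<longrightarrow>
       (\<forall>n\<le>N - 1. energy \<alpha> lam h M U n = energy \<alpha> lam h M U 0))
    \<and>
    (\<exists>C>0. \<forall>(M::nat) (N::nat) (U :: nat \<Rightarrow> int \<Rightarrow> real).
       let h = (xr - xl) / real M; \<tau> = T / real N in
       M \<ge> 4 \<longrightarrow> N \<ge> 2 \<longrightarrow> (\<forall>n\<le>N. Z0 M (U n)) \<longrightarrow>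
       (\<forall>n. 1 \<le> n \<and> n \<le> N - 1 \<longrightarrow> (\<forall>i. 2 \<le> i \<and> i \<le> int M - 2 \<longrightarrow>
            scheme_S m a b c \<nu> \<alpha> lam h \<tau> U n i)) \<longrightarrow>
       (\<forall>i. 0 \<le> i \<and> i \<le> int M \<longrightarrow> U 0 i = u0 (xl + real_of_int i * h)) \<longrightarrow>
       (\<forall>i. 2 \<le> i \<and> i \<le> int M - 2 \<longrightarrow> scheme_CN m a b c \<nu> \<alpha> lam h \<tau> (U 0) (U 1) i) \<longrightarrow>
       (gnorm2 h M (U 1) + \<alpha> * gnorm2 h M (dx h (U 1)) + lam * gnorm2 h M (dx h (dxb h (U 1)))
          = gnorm2 h M (U 0) + \<alpha> * gnorm2 h M (dx h (U 0)) + lam * gnorm2 h M (dx h (dxb h (U 0))))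
       \<and> (\<forall>n\<le>N. gsup M (U n) \<le> C \<and> gsup M (dx h (U n)) \<le> C))"
proof -
  obtain B where B: "0 \<le> B"
    and initial: "\<And>M U. 1 \<le> M \<Longrightarrow> \<forall>i. 0 \<le> i \<and> i \<le> int M \<longrightarrow> U i = u0 (xl + real_of_int i * ((xr - xl) / real M))
      \<Longrightarrow> grid_energy \<alpha> lam ((xr - xl) / real M) M U \<le> B"
    using C7_0_samples_grid_energy_bounded[OF assms(6,4) less_imp_le[OF assms(2)] less_imp_le[OF assms(3)]]
    by blast
  define C where "C = 1 + sqrt (2 * B / \<alpha> + 2 * B) + sqrt (2 * B / lam + 2 * B / \<alpha>)"
  have C: "0 < C" "sqrt (2 * B / \<alpha> + 2 * B) \<le> C" "sqrt (2 * B / lam + 2 * B / \<alpha>) \<le> C"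
    using B assms(2,3) by (simp_all add: C_def add_pos_nonneg)
  show ?thesis
    unfolding Let_def
    apply (intro conjI allI impI exI[of _ C])
    subgoal for M N U n
      by (rule energy_conserved) (use assms(5) in simp_all)
    subgoal
      by (rule C)
    subgoal for M N U
      unfolding grid_energy_def[symmetric]
      by (rule grid_energy_step_CN[where m=m and a=a and b=b and c=c and \<nu>=\<nu> and \<tau>="T / real N"])
        (use assms(5) in simp_all)
    subgoal for M N U n
      using initial[of M "U 0"] assms(2-5)
      by (intro order_trans[OF scheme_solution_sup_bounds(1)[where m=m and a=a and b=b and c=c
            and \<nu>=\<nu> and \<tau>="T / real N"] C(2)]) simp_all
    subgoal for M N U n
      using initial[of M "U 0"] assms(2-5)
      by (intro order_trans[OF scheme_solution_sup_bounds(2)[where m=m and a=a and b=b and c=c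
            and \<nu>=\<nu> and \<tau>="T / real N"] C(3)]) simp_all
    done
qed

end
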